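(* Let $\mathbf{X}\subset\mathbb{R}^d$ be finite, $k\ge1$, $\ell>0$, and consider the $k$-means$\parallel$ seeding algorithm with parameter $\ell$. For every round $t\ge1$: - if $\ell<k$: $\mathbb{E}[\mathrm{cost}(\mathbf{X},C_{t+1})]\le e^{-\ell/k}\,\mathbb{E}[\mathrm{cost}(\mathbf{X},C_t)]+5\,\mathrm{OPT}_k(\mathbf{X})$; - if $\ell\ge k$: $\mathbb{E}[\mathrm{cost}(\mathbf{X},C_{t+1})]\le \frac{k}{e\ell}\,\mathbb{E}[\mathrm{cost}(\mathbf{X},C_t)]+5\,\mathrm{OPT}_k(\mathbf{X})$.
   Context: For a finite $C\subset\mathbb{R}^d$, $\mathrm{cost}(x,C)=\min_{c\in C}\|x-c\|^2$, $\mathrm{cost}(\mathbf{Y},C)=\sum_{x\in\mathbf{Y}}\mathrm{cost}(x,C)$, $\mathrm{OPT}_k(\mathbf{X})=\min_{|C|=k}\mathrm{cost}(\mathbf{X},C)$. The $k$-means$\parallel$ seeding algorithm with parameter $\ell$: choose $c$ uniformly at random from $\mathbf{X}$, $C_1=\{c\}$; in round $t=1,2,\dots$, let $\lambda_t(x)=\ell\,\mathrm{cost}(x,C_t)/\mathrm{cost}(\mathbf{X},C_t)$, include each $x\in\mathbf{X}$ in a set $C'$ independently with probability $\min\{1,\lambda_t(x)\}$, and set $C_{t+1}=C_t\cup C'$. *)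

theory Defs
  imports "HOL-Analysis.Analysis" "HOL-Probability.Probability"
begin

definition pcost :: "'a::euclidean_space \<Rightarrow> 'a set \<Rightarrow> real" where
  "pcost x C = Min ((\<lambda>c. (norm (x - c))\<^sup>2) ` C)"

definition setcost :: "'a::euclidean_space set \<Rightarrow> 'a set \<Rightarrow> real" where
  "setcost Y C = (\<Sum>x\<in>Y. pcost x C)"

definition OPT :: "nat \<Rightarrow> 'a::euclidean_space set \<Rightarrow> real" where
  "OPT k X = Inf {setcost X C | C. finite C \<and> card C = k}"

definition samp_rate :: "'a::euclidean_space set \<Rightarrow> real \<Rightarrow> 'a set \<Rightarrow> 'a \<Rightarrow> real" where
  "samp_rate X l C x = l * pcost x C / setcost X C"

definition kmpar_step :: "'a::euclidean_space set \<Rightarrow> real \<Rightarrow> 'a set \<Rightarrow> 'a set pmf" where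
  "kmpar_step X l C =
     map_pmf (\<lambda>b. C \<union> {x\<in>X. b x})
       (Pi_pmf X False (\<lambda>x. bernoulli_pmf (min 1 (samp_rate X l C x))))"

text \<open>kmpar_seq X l n is the distribution of C_(n+1): C_1 = {c}, c uniform from X.\<close>
primrec kmpar_seq :: "'a::euclidean_space set \<Rightarrow> real \<Rightarrow> nat \<Rightarrow> 'a set pmf" where
  "kmpar_seq X l 0 = map_pmf (\<lambda>c. {c}) (pmf_of_set X)"
| "kmpar_seq X l (Suc n) = bind_pmf (kmpar_seq X l n) (kmpar_step X l)"

definition kmpar_C :: "'a::euclidean_space set \<Rightarrow> real \<Rightarrow> nat \<Rightarrow> 'a set pmf" where
  "kmpar_C X l t = kmpar_seq X l (t - 1)"

definition exp_cost :: "'a::euclidean_space set \<Rightarrow> real \<Rightarrow> nat \<Rightarrow> real" where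
  "exp_cost X l t = measure_pmf.expectation (kmpar_C X l t) (\<lambda>C. setcost X C)"

end

theory Submission
  imports Defs
begin

(* Fix any k centres K and split X into the cells P of their Voronoi partition. In one round a
   cell P whose current cost is c receives no sampled point with probability at most
   exp (- l c / cost(X, C)); if it receives some, the best sampled point of P is at least as good
   as a D^2-sample from P, whose expected cost is at most 5 cost(P, centroid P) by a scalar
   inequality between the distances of a point to C, to the centroid, and of the centroid to C.
   Hence E cost(P, C') <= exp (- l c / cost(X, C)) c + 5 cost(P, K). Summing over the k cells, the
   function y exp(-y) is bounded by its tangent at l/k when l < k and by 1/e otherwise, which
   yields the factors exp(-l/k) and k/(e l); averaging over C_t and minimising over K gives the
   theorem. *)

section \<open>A scalar inequality\<close>

lemma min_sq_bound_near:
  fixes D \<Delta> r q :: real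
  assumes "q \<ge> 0" "r \<ge> 0" "D \<ge> 0" "D \<le> \<Delta> + r" "\<Delta> \<le> q"
  shows "D\<^sup>2 * min (q\<^sup>2) (r\<^sup>2) \<le> 4 * q\<^sup>2 * r\<^sup>2"
proof (cases "r \<le> q")
  case True
  then have "D\<^sup>2 \<le> (2 * q)\<^sup>2" using assms by (intro power_mono) auto
  moreover have "min (q\<^sup>2) (r\<^sup>2) = r\<^sup>2" using True assms by (simp add: power_mono)
  ultimately show ?thesis by (simp add: power_mult_distrib mult_right_mono)
next
  case False
  then have "D\<^sup>2 \<le> (2 * r)\<^sup>2" using assms by (intro power_mono) auto
  moreover have "min (q\<^sup>2) (r\<^sup>2) = q\<^sup>2" using False assms by (simp add: power_mono)
  ultimately show ?thesis
    using mult_right_mono[of "D\<^sup>2" "(2 * r)\<^sup>2" "q\<^sup>2"] by (simp add: power_mult_distrib algebra_simps)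
qed

lemma min_sq_bound_far_large:
  fixes D \<Delta> r q :: real
  assumes "q > 0" "r \<ge> q" "D \<ge> 0" "\<Delta> > q" "D \<le> \<Delta> + r"
  shows "\<Delta>\<^sup>2 * (D\<^sup>2 * q\<^sup>2) \<le> \<Delta>\<^sup>2 * (4 * q\<^sup>2 * r\<^sup>2) + q\<^sup>2 * (\<Delta>\<^sup>2 - q\<^sup>2) * (D\<^sup>2 - q\<^sup>2)"
proof -
  have "D\<^sup>2 \<le> (\<Delta> + r)\<^sup>2" using assms by (intro power_mono) auto
  then have "q\<^sup>2 * (D\<^sup>2 + \<Delta>\<^sup>2) \<le> q\<^sup>2 * ((\<Delta> + r)\<^sup>2 + \<Delta>\<^sup>2)" by (intro mult_left_mono) auto
  also have "\<dots> \<le> 4 * r\<^sup>2 * \<Delta>\<^sup>2 + q ^ 4"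
  proof -
    have "(r\<^sup>2 - q\<^sup>2) * (\<Delta>\<^sup>2 - q\<^sup>2) \<ge> 0" using assms
      by (intro mult_nonneg_nonneg) (auto simp: power_mono)
    moreover have "r * \<Delta> \<ge> q * q" using assms by (intro mult_mono) auto
    then have "2 * r * \<Delta> * (r * \<Delta> - q\<^sup>2) \<ge> 0" using assms by (simp add: power2_eq_square)
    moreover have "q\<^sup>2 * (r\<^sup>2 - q\<^sup>2) \<ge> 0" using assms by (simp add: power_mono)
    moreover have "4 * r\<^sup>2 * \<Delta>\<^sup>2 + q ^ 4 - q\<^sup>2 * ((\<Delta> + r)\<^sup>2 + \<Delta>\<^sup>2)
        = 2 * (r\<^sup>2 - q\<^sup>2) * (\<Delta>\<^sup>2 - q\<^sup>2) + 2 * r * \<Delta> * (r * \<Delta> - q\<^sup>2) + q\<^sup>2 * (r\<^sup>2 - q\<^sup>2)"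
      by (simp add: power2_eq_square power4_eq_xxxx algebra_simps)
    ultimately show ?thesis by linarith
  qed
  finally have "q\<^sup>2 * (q\<^sup>2 * (D\<^sup>2 + \<Delta>\<^sup>2)) \<le> q\<^sup>2 * (4 * r\<^sup>2 * \<Delta>\<^sup>2 + q ^ 4)"
    by (intro mult_left_mono) auto
  then show ?thesis by (simp add: power2_eq_square power4_eq_xxxx algebra_simps)
qed

lemma min_sq_bound_far_small:
  fixes D \<Delta> r q :: real
  assumes "q > 0" "r \<ge> 0" "r < q" "D \<ge> 0" "\<Delta> > q" "D \<le> \<Delta> + r" "\<Delta> \<le> D + r"
  shows "\<Delta>\<^sup>2 * (D\<^sup>2 * r\<^sup>2) \<le> \<Delta>\<^sup>2 * (4 * q\<^sup>2 * r\<^sup>2) + q\<^sup>2 * (\<Delta>\<^sup>2 - q\<^sup>2) * (D\<^sup>2 - q\<^sup>2)"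
proof -
  have r2: "r\<^sup>2 \<le> q\<^sup>2" using assms by (simp add: power_mono)
  consider "2 * q \<le> D" | "q \<le> D" "D < 2 * q" | "D < q" by linarith
  then have "r\<^sup>2 * \<Delta>\<^sup>2 * (D\<^sup>2 - 4 * q\<^sup>2) \<le> q\<^sup>2 * (\<Delta>\<^sup>2 - q\<^sup>2) * (D\<^sup>2 - q\<^sup>2)"
  proof cases
    case 1
    then have "(2 * q)\<^sup>2 \<le> D\<^sup>2" using assms by (intro power_mono) auto
    then have "r\<^sup>2 * \<Delta>\<^sup>2 * (D\<^sup>2 - 4 * q\<^sup>2) \<le> q\<^sup>2 * \<Delta>\<^sup>2 * (D\<^sup>2 - 4 * q\<^sup>2)"
      using r2 by (intro mult_right_mono) auto
    moreover have "D\<^sup>2 \<le> 3 * \<Delta>\<^sup>2 + q\<^sup>2"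
    proof -
      have "D\<^sup>2 \<le> (\<Delta> + r)\<^sup>2" using assms by (intro power_mono) auto
      also have "\<dots> = \<Delta>\<^sup>2 + 2 * \<Delta> * r + r\<^sup>2" by (simp add: power2_eq_square algebra_simps)
      also have "\<dots> \<le> \<Delta>\<^sup>2 + 2 * \<Delta> * \<Delta> + q\<^sup>2" using r2 assms by (intro add_mono mult_left_mono) auto
      finally show ?thesis by (simp add: power2_eq_square)
    qed
    then have "0 \<le> q\<^sup>2 * (q\<^sup>2 * (3 * \<Delta>\<^sup>2 + q\<^sup>2 - D\<^sup>2))" by simp
    ultimately show ?thesis by (simp add: algebra_simps power2_eq_square)
  next
    case 2
    have "(\<Delta>\<^sup>2 - q\<^sup>2) * (D\<^sup>2 - q\<^sup>2) \<ge> 0" using 2 assms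
      by (intro mult_nonneg_nonneg) (auto simp: power_mono)
    moreover have "D\<^sup>2 \<le> (2 * q)\<^sup>2" using 2 assms by (intro power_mono) auto
    then have "r\<^sup>2 * \<Delta>\<^sup>2 * (D\<^sup>2 - 4 * q\<^sup>2) \<le> 0"
      by (intro mult_nonneg_nonpos) (auto simp: power_mult_distrib)
    ultimately show ?thesis by (simp add: mult.assoc) (smt (verit) mult_nonneg_nonneg zero_le_power2)
  next
    case 3
    \<comment> \<open>Here r \<ge> \<Delta> - D > 0, and AM-GM gives (\<Delta> - D)^2 \<ge> 4 (\<Delta> - q) (q - D).\<close>
    have "(\<Delta> - D)\<^sup>2 \<le> r\<^sup>2" using 3 assms by (intro power_mono) auto
    moreover have "4 * (\<Delta> - q) * (q - D) \<le> (\<Delta> - D)\<^sup>2"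
      using zero_le_power2[of "(\<Delta> - q) - (q - D)"] by (simp add: power2_eq_square algebra_simps)
    ultimately have r2': "4 * (\<Delta> - q) * (q - D) \<le> r\<^sup>2" by linarith
    have "3 * q\<^sup>2 \<le> 4 * q\<^sup>2 - D\<^sup>2" using 3 assms by (simp add: power_mono)
    with r2' have "(4 * (\<Delta> - q) * (q - D)) * \<Delta>\<^sup>2 * (3 * q\<^sup>2) \<le> r\<^sup>2 * \<Delta>\<^sup>2 * (4 * q\<^sup>2 - D\<^sup>2)"
      using assms 3 by (intro mult_mono) auto
    moreover have "q\<^sup>2 * (\<Delta>\<^sup>2 - q\<^sup>2) * (q\<^sup>2 - D\<^sup>2) \<le> (4 * (\<Delta> - q) * (q - D)) * \<Delta>\<^sup>2 * (3 * q\<^sup>2)"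
    proof -
      have "(\<Delta> + q) * (q + D) \<le> (2 * \<Delta>) * (2 * \<Delta>)" using assms 3 by (intro mult_mono) auto
      then have "((\<Delta> - q) * (q - D) * q\<^sup>2) * ((\<Delta> + q) * (q + D))
          \<le> ((\<Delta> - q) * (q - D) * q\<^sup>2) * ((2 * \<Delta>) * (2 * \<Delta>))"
        using assms 3 by (intro mult_left_mono) auto
      moreover have "(\<Delta> - q) * (q - D) * q\<^sup>2 * \<Delta>\<^sup>2 \<ge> 0" using assms 3 by simp
      ultimately show ?thesis by (simp add: power2_eq_square algebra_simps)
    qed
    ultimately show ?thesis by (simp add: algebra_simps)
  qed
  then show ?thesis by (simp add: algebra_simps)
qed

text \<open>It depends only on the cluster (\<open>\<Delta>\<close> is the distance
  from the centroid to C and q^2 the mean cost), so the term it multiplies sums to zero over the cluster.\<close>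
definition centroid_correction :: "real \<Rightarrow> real \<Rightarrow> real" where
  "centroid_correction \<Delta> q = (if \<Delta> \<le> q then 0 else q\<^sup>2 * (\<Delta>\<^sup>2 - q\<^sup>2) / \<Delta>\<^sup>2)"

lemma min_sq_bound:
  fixes D \<Delta> r q :: real
  assumes "q > 0" "r \<ge> 0" "D \<ge> 0" "D \<le> \<Delta> + r" "\<Delta> \<le> D + r"
  shows "D\<^sup>2 * min (q\<^sup>2) (r\<^sup>2) \<le> 4 * q\<^sup>2 * r\<^sup>2 + centroid_correction \<Delta> q * (D\<^sup>2 - q\<^sup>2)"
proof (cases "\<Delta> \<le> q")
  case True
  then show ?thesis
    using min_sq_bound_near[of q r D \<Delta>] assms by (simp add: centroid_correction_def)
next
  case False
  then have \<Delta>: "\<Delta>\<^sup>2 > 0" using assms by simp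
  have "\<Delta>\<^sup>2 * (D\<^sup>2 * min (q\<^sup>2) (r\<^sup>2)) \<le> \<Delta>\<^sup>2 * (4 * q\<^sup>2 * r\<^sup>2) + q\<^sup>2 * (\<Delta>\<^sup>2 - q\<^sup>2) * (D\<^sup>2 - q\<^sup>2)"
  proof (cases "r \<ge> q")
    case True
    then have "min (q\<^sup>2) (r\<^sup>2) = q\<^sup>2" using assms by (simp add: power_mono)
    then show ?thesis using min_sq_bound_far_large[of q r D \<Delta>] True False assms by simp
  next
    case small: False
    then have "min (q\<^sup>2) (r\<^sup>2) = r\<^sup>2" using assms by (simp add: power_mono)
    then show ?thesis using min_sq_bound_far_small[of q r D \<Delta>] small False assms by simp
  qed
  then show ?thesis
    using False \<Delta> by (simp add: centroid_correction_def field_simps)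
qed

section \<open>Costs, centroids and D^2 sampling\<close>

lemma pcost_nonneg: "finite C \<Longrightarrow> C \<noteq> {} \<Longrightarrow> pcost x C \<ge> 0"
  unfolding pcost_def by (subst Min_ge_iff) auto

lemma pcost_le: "finite C \<Longrightarrow> c \<in> C \<Longrightarrow> pcost x C \<le> (norm (x - c))\<^sup>2"
  unfolding pcost_def by (rule Min_le) auto

lemma pcost_antimono: "finite C' \<Longrightarrow> C \<subseteq> C' \<Longrightarrow> C \<noteq> {} \<Longrightarrow> pcost x C' \<le> pcost x C"
  unfolding pcost_def by (rule Min_antimono) auto

lemma pcost_attained:
  assumes "finite C" "C \<noteq> {}"
  obtains c where "c \<in> C" "pcost x C = (norm (x - c))\<^sup>2"
proof -
  have "pcost x C \<in> (\<lambda>c. (norm (x - c))\<^sup>2) ` C"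
    unfolding pcost_def using assms by (intro Min_in) auto
  then show ?thesis using that by blast
qed

lemma pcost_nearest:
  assumes "finite K" "K \<noteq> {}"
  obtains a where "\<And>x. a x \<in> K" "\<And>x. pcost x K = (norm (x - a x))\<^sup>2"
proof -
  have "\<forall>x. \<exists>c. c \<in> K \<and> pcost x K = (norm (x - c))\<^sup>2"
    using pcost_attained[OF assms] by metis
  then show ?thesis using that by metis
qed

lemma sqrt_pcost_le:
  assumes "finite C" "C \<noteq> {}"
  shows "sqrt (pcost x C) \<le> sqrt (pcost y C) + norm (x - y)"
proof -
  obtain c where c: "c \<in> C" "pcost y C = (norm (y - c))\<^sup>2" using pcost_attained[OF assms] .
  have "sqrt (pcost x C) \<le> norm (x - c)"
    using real_sqrt_le_mono[OF pcost_le[OF assms(1) c(1), of x]] by simp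
  also have "\<dots> \<le> norm (x - y) + norm (y - c)" using norm_triangle_ineq[of "x - y" "y - c"] by simp
  finally show ?thesis using c(2) by simp
qed

lemma setcost_nonneg: "finite C \<Longrightarrow> C \<noteq> {} \<Longrightarrow> setcost X C \<ge> 0"
  unfolding setcost_def by (intro sum_nonneg pcost_nonneg)

lemma setcost_antimono: "finite C' \<Longrightarrow> C \<subseteq> C' \<Longrightarrow> C \<noteq> {} \<Longrightarrow> setcost X C' \<le> setcost X C"
  unfolding setcost_def by (intro sum_mono pcost_antimono)

lemma setcost_union_le_Min:
  assumes "finite C" "C \<noteq> {}" "finite S"
  shows "setcost P (C \<union> S) \<le> Min (insert (setcost P C) ((\<lambda>y. setcost P (insert y C)) ` S))"
proof -
  have "setcost P (C \<union> S) \<le> setcost P (insert y C)" if "y \<in> S" for y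
    using assms that by (intro setcost_antimono) auto
  moreover have "setcost P (C \<union> S) \<le> setcost P C" using assms by (intro setcost_antimono) auto
  ultimately show ?thesis using assms(3) by (subst Min_ge_iff) auto
qed

definition centroid :: "'a::euclidean_space set \<Rightarrow> 'a" where
  "centroid P = (1 / real (card P)) *\<^sub>R (\<Sum>y\<in>P. y)"

lemma sum_sq_dist_centroid:
  fixes P :: "'a::euclidean_space set"
  assumes "finite P"
  shows "(\<Sum>y\<in>P. (norm (x - y))\<^sup>2)
       = (\<Sum>y\<in>P. (norm (y - centroid P))\<^sup>2) + real (card P) * (norm (x - centroid P))\<^sup>2"
proof (cases "P = {}")
  case False
  define a where "a = centroid P"
  have "real (card P) *\<^sub>R a = (\<Sum>y\<in>P. y)"
    using assms False by (simp add: a_def centroid_def)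
  then have "(\<Sum>y\<in>P. a - y) = 0" by (simp add: sum_subtractf sum_constant_scaleR)
  have "(\<Sum>y\<in>P. (norm (x - y))\<^sup>2)
      = (\<Sum>y\<in>P. (norm (x - a))\<^sup>2 + (norm (y - a))\<^sup>2 + 2 * inner (x - a) (a - y))"
    by (intro sum.cong) (simp_all add: power2_norm_eq_inner inner_simps inner_commute)
  also have "\<dots> = real (card P) * (norm (x - a))\<^sup>2 + (\<Sum>y\<in>P. (norm (y - a))\<^sup>2)
      + 2 * inner (x - a) (\<Sum>y\<in>P. a - y)"
    by (simp add: sum.distrib sum_distrib_left inner_sum_right)
  finally show ?thesis using \<open>(\<Sum>y\<in>P. a - y) = 0\<close> by (simp add: a_def)
qed simp

lemma sum_sq_dist_centroid_le:
  fixes P :: "'a::euclidean_space set"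
  assumes "finite P"
  shows "(\<Sum>y\<in>P. (norm (y - centroid P))\<^sup>2) \<le> (\<Sum>y\<in>P. (norm (y - z))\<^sup>2)"
  using sum_sq_dist_centroid[OF assms, of z] by (simp add: norm_minus_commute)

lemma setcost_insert_le:
  fixes P C :: "'a::euclidean_space set"
  assumes "finite P" "finite C" "C \<noteq> {}" and q: "real (card P) * q\<^sup>2 = setcost P C"
  shows "setcost P (insert x C)
       \<le> (\<Sum>y\<in>P. (norm (y - centroid P))\<^sup>2) + real (card P) * min (q\<^sup>2) ((norm (x - centroid P))\<^sup>2)"
proof -
  have A: "(\<Sum>y\<in>P. (norm (y - centroid P))\<^sup>2) \<ge> 0" by (intro sum_nonneg) auto
  have "setcost P (insert x C) \<le> setcost P C"
    using assms by (intro setcost_antimono) auto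
  moreover have "setcost P (insert x C) \<le> (\<Sum>y\<in>P. (norm (x - y))\<^sup>2)"
    unfolding setcost_def using assms pcost_le[of "insert x C" x]
    by (intro sum_mono) (simp add: norm_minus_commute)
  ultimately show ?thesis
    using A q sum_sq_dist_centroid[OF assms(1), of x] by (auto simp: min_def)
qed

text \<open>Read probabilistically: adding to C a point of P drawn with probability proportional to its
  cost (D^2 sampling) leaves P with expected cost at most five times its cost about its centroid.\<close>
lemma d2_sample_cost_le:
  fixes P C :: "'a::euclidean_space set"
  assumes P: "finite P" and C: "finite C" "C \<noteq> {}"
  shows "(\<Sum>x\<in>P. pcost x C * setcost P (insert x C))
       \<le> 5 * (\<Sum>y\<in>P. (norm (y - centroid P))\<^sup>2) * setcost P C"
proof -
  define A where "A = (\<Sum>y\<in>P. (norm (y - centroid P))\<^sup>2)"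
  define s where "s = setcost P C"
  define n where "n = real (card P)"
  have pc: "pcost x C \<ge> 0" for x using pcost_nonneg[OF C] .
  show ?thesis
  proof (cases "s = 0")
    case True
    then have "\<forall>x\<in>P. pcost x C = 0"
      using P pc by (simp add: s_def setcost_def sum_nonneg_eq_0_iff)
    then show ?thesis using True by (simp add: s_def)
  next
    case False
    then have "s > 0" using setcost_nonneg[OF C] by (simp add: s_def order_less_le)
    have n: "n > 0" using P False by (auto simp: n_def s_def setcost_def card_gt_0_iff)
    define q where "q = sqrt (s / n)"
    have q: "q > 0" "n * q\<^sup>2 = s" using \<open>s > 0\<close> n by (auto simp: q_def)
    define \<Delta> where "\<Delta> = sqrt (pcost (centroid P) C)"
    let ?w = "centroid_correction \<Delta> q"
    have "pcost x C * setcost P (insert x C)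
        \<le> A * pcost x C + n * (4 * q\<^sup>2 * (norm (x - centroid P))\<^sup>2 + ?w * (pcost x C - q\<^sup>2))" for x
    proof -
      let ?D = "sqrt (pcost x C)" and ?r = "norm (x - centroid P)"
      have "pcost x C * setcost P (insert x C) \<le> pcost x C * (A + n * min (q\<^sup>2) (?r\<^sup>2))"
        using setcost_insert_le[OF P C] q pc by (intro mult_left_mono) (auto simp: A_def n_def s_def)
      also have "\<dots> = A * pcost x C + n * (?D\<^sup>2 * min (q\<^sup>2) (?r\<^sup>2))"
        using pc by (simp add: algebra_simps)
      also have "?D\<^sup>2 * min (q\<^sup>2) (?r\<^sup>2) \<le> 4 * q\<^sup>2 * ?r\<^sup>2 + ?w * (?D\<^sup>2 - q\<^sup>2)"
        using sqrt_pcost_le[OF C, of x "centroid P"] sqrt_pcost_le[OF C, of "centroid P" x] q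
        by (intro min_sq_bound) (auto simp: \<Delta>_def norm_minus_commute pc)
      finally show ?thesis using n pc by (simp add: mult_left_mono)
    qed
    then have "(\<Sum>x\<in>P. pcost x C * setcost P (insert x C))
        \<le> (\<Sum>x\<in>P. A * pcost x C + n * (4 * q\<^sup>2 * (norm (x - centroid P))\<^sup>2 + ?w * (pcost x C - q\<^sup>2)))"
      by (intro sum_mono)
    also have "\<dots> = A * s + n * (4 * q\<^sup>2 * A + ?w * (s - n * q\<^sup>2))"
      by (simp add: A_def s_def n_def setcost_def sum.distrib sum_distrib_left sum_subtractf
          right_diff_distrib distrib_left)
    also have "\<dots> = 5 * A * s" using q by (simp add: algebra_simps)
    finally show ?thesis by (simp add: A_def s_def)
  qed
qed

section \<open>The minimum over an independent sample\<close>

lemma mul_one_minus_exp_neg_le: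
  fixes a b :: real
  assumes "0 \<le> a" "a \<le> b" "b > 0"
  shows "a * (1 - exp (- b)) \<le> b * (1 - exp (- a))"
proof -
  define t where "t = a / b"
  have t: "0 \<le> t" "t \<le> 1" using assms by (auto simp: t_def)
  have "exp ((1 - t) *\<^sub>R 0 + t *\<^sub>R (- b)) \<le> (1 - t) * exp 0 + t * exp (- b)"
    using t by (intro convex_onD[OF exp_convex]) auto
  moreover have "(1 - t) *\<^sub>R 0 + t *\<^sub>R (- b) = - a" using assms by (simp add: t_def)
  ultimately have "b * exp (- a) \<le> b * (1 - t + t * exp (- b))"
    using assms by (intro mult_left_mono) auto
  also have "\<dots> = b - a + a * exp (- b)" using assms by (simp add: t_def field_simps)
  finally show ?thesis by (simp add: algebra_simps)
qed

text \<open>Bound on the expected minimum of c and of g over a random sample containing each x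
  independently with probability at least 1 - exp (- \<open>\<mu>\<close> x): here M is the sum of \<open>\<mu>\<close> and S of \<open>\<mu>\<close> x * g x,
  so S / M is a weighted mean of g (for M = 0 the bound is c, whatever S / 0 is).\<close>
definition min_sample_bound :: "real \<Rightarrow> real \<Rightarrow> real \<Rightarrow> real" where
  "min_sample_bound c M S = exp (- M) * c + (1 - exp (- M)) * (S / M)"

lemma min_sample_bound_ge:
  assumes "g \<le> c" "M \<ge> 0" "M * g \<le> S"
  shows "g \<le> min_sample_bound c M S"
proof (cases "M = 0")
  case False
  then have "g \<le> S / M" using assms by (simp add: le_divide_eq mult.commute)
  moreover have "exp (- M) \<le> 1" using assms by simp
  ultimately have "exp (- M) * g + (1 - exp (- M)) * g \<le> min_sample_bound c M S"
    unfolding min_sample_bound_def using assms by (intro add_mono mult_left_mono) auto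
  then show ?thesis by (simp add: algebra_simps)
qed (use assms in \<open>simp add: min_sample_bound_def\<close>)

lemma min_sample_bound_insert:
  fixes \<mu> g c M S :: real
  assumes "\<mu> \<ge> 0" "M \<ge> 0" "M * g \<le> S"
  shows "(1 - exp (- \<mu>)) * g + exp (- \<mu>) * min_sample_bound c M S
       \<le> min_sample_bound c (\<mu> + M) (\<mu> * g + S)"
proof (cases "M = 0")
  case True
  then show ?thesis
    using assms mult_left_le[of "exp (- \<mu>)" S]
    by (cases "\<mu> = 0") (simp_all add: min_sample_bound_def field_simps)
next
  case False
  then have "M > 0" using assms by simp
  define T where "T = \<mu> + M"
  have "T > 0" using \<open>M > 0\<close> assms by (simp add: T_def)
  have "exp (- T) = exp (- \<mu>) * exp (- M)" by (simp add: T_def flip: exp_add)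
  define K where "K = T * (1 - exp (- \<mu>)) - (1 - exp (- T)) * \<mu>"
  have "\<mu> * (1 - exp (- T)) \<le> T * (1 - exp (- \<mu>))"
    using assms \<open>M > 0\<close> by (intro mul_one_minus_exp_neg_le) (auto simp: T_def)
  then have "K \<ge> 0" by (simp add: K_def algebra_simps)
  moreover have "g \<le> S / M" using assms \<open>M > 0\<close> by (simp add: le_divide_eq mult.commute)
  ultimately have "0 \<le> K * (S / M - g) / T" using \<open>T > 0\<close> by simp
  also have "\<dots> = min_sample_bound c (\<mu> + M) (\<mu> * g + S)
      - ((1 - exp (- \<mu>)) * g + exp (- \<mu>) * min_sample_bound c M S)"
    using \<open>T > 0\<close> \<open>M > 0\<close> \<open>exp (- T) = exp (- \<mu>) * exp (- M)\<close>
    unfolding min_sample_bound_def K_def T_def by (simp add: field_simps)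
  finally show ?thesis by simp
qed

lemma min_sample_bound_le:
  assumes "M \<ge> 0" "B \<ge> 0" "S \<le> M * B"
  shows "min_sample_bound c M S \<le> exp (- M) * c + B"
proof (cases "M = 0")
  case False
  then have "S / M \<le> B" using assms by (simp add: divide_le_eq mult.commute)
  moreover have "0 \<le> 1 - exp (- M)" "1 - exp (- M) \<le> 1" using assms by auto
  ultimately have "(1 - exp (- M)) * (S / M) \<le> B"
    using assms mult_right_mono[of "1 - exp (- M)" 1 "S / M"] mult_nonneg_nonpos[of "1 - exp (- M)" "S / M"]
    by (cases "S / M \<ge> 0") auto
  then show ?thesis by (simp add: min_sample_bound_def)
qed (use assms in \<open>simp add: min_sample_bound_def\<close>)

lemma finite_set_pmf_Pi_pmf_bool:
  assumes "finite A"
  shows "finite (set_pmf (Pi_pmf A False (p :: 'a \<Rightarrow> bool pmf)))"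
proof (rule finite_subset)
  show "set_pmf (Pi_pmf A False p) \<subseteq> (\<lambda>S x. x \<in> S) ` Pow A"
  proof
    fix f assume "f \<in> set_pmf (Pi_pmf A False p)"
    then have "\<forall>x. x \<notin> A \<longrightarrow> f x = False" using set_Pi_pmf_subset[OF assms, of False p] by auto
    then have "f = (\<lambda>x. x \<in> {x\<in>A. f x})" by auto
    then show "f \<in> (\<lambda>S x. x \<in> S) ` Pow A" by blast
  qed
qed (use assms in simp)

lemma expectation_Pi_pmf_bernoulli_insert:
  fixes h :: "('a \<Rightarrow> bool) \<Rightarrow> real"
  assumes "finite A" "x \<notin> A" "0 \<le> p x" "p x \<le> 1"
  defines "B \<equiv> \<lambda>A. Pi_pmf A False (\<lambda>x. bernoulli_pmf (p x))"
  shows "measure_pmf.expectation (B (insert x A)) h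
       = p x * measure_pmf.expectation (B A) (\<lambda>f. h (f(x := True)))
         + (1 - p x) * measure_pmf.expectation (B A) (\<lambda>f. h (f(x := False)))"
proof -
  have "B (insert x A) = bernoulli_pmf (p x) \<bind> (\<lambda>y. map_pmf (\<lambda>f. f(x := y)) (B A))"
    unfolding B_def Pi_pmf_insert'[OF assms(1,2)] by (simp add: map_pmf_def)
  then have "measure_pmf.expectation (B (insert x A)) h
      = (\<Sum>y\<in>UNIV. pmf (bernoulli_pmf (p x)) y *\<^sub>R measure_pmf.expectation (B A) (\<lambda>f. h (f(x := y))))"
    by (simp add: pmf_expectation_bind[of UNIV] B_def finite_set_pmf_Pi_pmf_bool assms(1))
  then show ?thesis using assms(3,4) by (simp add: UNIV_bool)
qed

lemma expectation_min_sample_insert_least: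
  fixes S :: "'a set" and p g :: "'a \<Rightarrow> real"
  assumes "finite S" "x \<notin> S" "0 \<le> p x" "p x \<le> 1" "g x \<le> c" "\<And>y. y \<in> S \<Longrightarrow> g x \<le> g y"
  defines "B \<equiv> \<lambda>A. Pi_pmf A False (\<lambda>x. bernoulli_pmf (p x))"
  shows "measure_pmf.expectation (B (insert x S)) (\<lambda>b. Min (insert c (g ` {y \<in> insert x S. b y})))
       = p x * g x + (1 - p x) * measure_pmf.expectation (B S) (\<lambda>b. Min (insert c (g ` {y\<in>S. b y})))"
proof -
  let ?h = "\<lambda>b. Min (insert c (g ` {y \<in> insert x S. b y}))"
  have "(\<lambda>f. ?h (f(x := True))) = (\<lambda>f. g x)"
  proof
    fix f
    have "{y \<in> insert x S. (f(x := True)) y} = insert x {y\<in>S. f y}" using assms(2) by auto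
    moreover have "Min (insert c (g ` insert x {y\<in>S. f y})) = g x"
      using assms(1,5,6) by (intro Min_eqI) auto
    ultimately show "?h (f(x := True)) = g x" by simp
  qed
  moreover have "(\<lambda>f. ?h (f(x := False))) = (\<lambda>f. Min (insert c (g ` {y\<in>S. f y})))"
    using assms(2) by (intro ext arg_cong[where f = "\<lambda>A. Min (insert c (g ` A))"]) auto
  ultimately show ?thesis
    unfolding B_def using expectation_Pi_pmf_bernoulli_insert[of S x p ?h] assms(1-4) by simp
qed

lemma expectation_min_sample_le:
  fixes X :: "'a set" and p \<mu> g :: "'a \<Rightarrow> real"
  assumes "finite X"
    and "\<And>x. x \<in> X \<Longrightarrow> 0 \<le> p x" "\<And>x. x \<in> X \<Longrightarrow> p x \<le> 1"
    and "\<And>x. x \<in> X \<Longrightarrow> 0 \<le> \<mu> x" "\<And>x. x \<in> X \<Longrightarrow> 1 - exp (- \<mu> x) \<le> p x"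
    and "\<And>x. x \<in> X \<Longrightarrow> g x \<le> c"
  shows "measure_pmf.expectation (Pi_pmf X False (\<lambda>x. bernoulli_pmf (p x)))
           (\<lambda>b. Min (insert c (g ` {x\<in>X. b x})))
       \<le> min_sample_bound c (\<Sum>x\<in>X. \<mu> x) (\<Sum>x\<in>X. \<mu> x * g x)"
  using assms
proof (induction X rule: finite_ranking_induct[where f = "\<lambda>x. - g x"])
  case empty
  then show ?case by (simp add: min_sample_bound_def)
next
  \<comment> \<open>Points are added in decreasing order of g, so the new point x has the least value so far.\<close>
  case (insert x S)
  show ?case
  proof (cases "x \<in> S")
    case True
    then show ?thesis using insert by (simp add: insert_absorb)
  next
    case False
    let ?B = "\<lambda>A. Pi_pmf A False (\<lambda>x. bernoulli_pmf (p x))"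
    define V where "V = measure_pmf.expectation (?B S) (\<lambda>b. Min (insert c (g ` {x\<in>S. b x})))"
    define M where "M = (\<Sum>y\<in>S. \<mu> y)"
    define G where "G = (\<Sum>y\<in>S. \<mu> y * g y)"
    define e where "e = exp (- \<mu> x)"
    have V: "V \<le> min_sample_bound c M G" unfolding V_def M_def G_def using insert by auto
    have "M \<ge> 0" unfolding M_def using insert.prems by (intro sum_nonneg) auto
    have "M * g x \<le> G" unfolding M_def G_def sum_distrib_right
      using insert.prems insert.hyps(2) by (intro sum_mono mult_left_mono) auto
    have gx: "g x \<le> min_sample_bound c M G"
      using insert.prems \<open>M \<ge> 0\<close> \<open>M * g x \<le> G\<close> by (intro min_sample_bound_ge) auto
    have "measure_pmf.expectation (?B (insert x S)) (\<lambda>b. Min (insert c (g ` {y \<in> insert x S. b y})))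
        = p x * g x + (1 - p x) * V"
      unfolding V_def using insert.prems insert.hyps
      by (intro expectation_min_sample_insert_least False) auto
    also have "\<dots> \<le> p x * g x + (1 - p x) * min_sample_bound c M G"
      using V insert.prems by (intro add_left_mono mult_left_mono) auto
    also have "\<dots> \<le> (1 - e) * g x + e * min_sample_bound c M G"
      using gx insert.prems(4)[of x] mult_right_mono[of "1 - e" "p x" "min_sample_bound c M G - g x"]
      by (simp add: e_def algebra_simps)
    also have "\<dots> \<le> min_sample_bound c (\<mu> x + M) (\<mu> x * g x + G)"
      unfolding e_def using insert.prems \<open>M \<ge> 0\<close> \<open>M * g x \<le> G\<close> by (intro min_sample_bound_insert) auto
    finally show ?thesis using insert.hyps(1) False by (simp add: M_def G_def)
  qed
qed

section \<open>Sums of y exp(-y)\<close>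

lemma mul_exp_neg_le: "y * exp (- y) \<le> exp (- 1 :: real)"
proof -
  have "y * exp (- y) \<le> exp (y - 1) * exp (- y)"
    using exp_ge_add_one_self[of "y - 1"] by (intro mult_right_mono) auto
  then show ?thesis by (simp flip: exp_add)
qed

lemma mul_exp_neg_le_tangent:
  fixes y y0 :: real
  assumes "y \<ge> 0" "y0 < 1"
  shows "y * exp (- y) \<le> exp (- y0) * (y0 + (1 - y0) * (y - y0))"
proof -
  define t where "t = y - y0"
  have pos: "1 + t > 0" using assms by (simp add: t_def)
  have "exp (- t) * (1 + t) \<le> exp (- t) * exp t"
    using exp_ge_add_one_self[of t] by (intro mult_left_mono) auto
  then have "y * exp (- t) * (1 + t) \<le> y" using assms(1) by (simp add: mult.assoc mult_left_le flip: exp_add)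
  also have "y \<le> (y0 + (1 - y0) * t) * (1 + t)"
  proof -
    have "(y0 + (1 - y0) * t) * (1 + t) - y = t\<^sup>2 * (1 - y0)"
      by (simp add: t_def power2_eq_square algebra_simps)
    moreover have "t\<^sup>2 * (1 - y0) \<ge> 0" using assms by simp
    ultimately show ?thesis by linarith
  qed
  finally have "y * exp (- t) \<le> y0 + (1 - y0) * t" using pos by (simp add: mult_le_cancel_right)
  then have "exp (- y0) * (y * exp (- t)) \<le> exp (- y0) * (y0 + (1 - y0) * t)" by simp
  then show ?thesis by (simp add: t_def mult.left_commute flip: exp_add)
qed

lemma sum_mul_exp_neg_le_card:
  fixes y :: "'b \<Rightarrow> real"
  shows "(\<Sum>i\<in>I. y i * exp (- y i)) \<le> real (card I) * exp (- 1)"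
  using sum_bounded_above[of I "\<lambda>i. y i * exp (- y i)" "exp (- 1)"] mul_exp_neg_le by simp

lemma sum_mul_exp_neg_le_tangent:
  fixes y :: "'b \<Rightarrow> real"
  assumes I: "finite I" "I \<noteq> {}" and y: "\<And>i. i \<in> I \<Longrightarrow> y i \<ge> 0"
    and s: "(\<Sum>i\<in>I. y i) = s" "s < real (card I)"
  shows "(\<Sum>i\<in>I. y i * exp (- y i)) \<le> s * exp (- s / real (card I))"
proof -
  define n where "n = real (card I)"
  define y0 where "y0 = s / n"
  have n: "n > 0" using I by (simp add: n_def card_gt_0_iff)
  have "y0 < 1" using s n by (simp add: y0_def n_def)
  then have "(\<Sum>i\<in>I. y i * exp (- y i)) \<le> (\<Sum>i\<in>I. exp (- y0) * (y0 + (1 - y0) * (y i - y0)))"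
    using y by (intro sum_mono mul_exp_neg_le_tangent) auto
  also have "\<dots> = exp (- y0) * (n * y0 + (1 - y0) * (s - n * y0))"
    by (simp add: sum_distrib_left sum.distrib sum_subtractf s n_def flip: sum_distrib_left)
  also have "\<dots> = s * exp (- s / n)" using n by (simp add: y0_def)
  finally show ?thesis by (simp add: n_def)
qed

definition round_factor :: "real \<Rightarrow> nat \<Rightarrow> real" where
  "round_factor l k = (if l < real k then exp (- l / real k) else real k / (exp 1 * l))"

lemma sum_exp_neg_mul_le_round_factor:
  fixes c :: "'b \<Rightarrow> real"
  assumes I: "finite I" "card I = k" "k \<ge> 1" and l: "l > 0"
    and c: "\<And>i. i \<in> I \<Longrightarrow> c i \<ge> 0" "(\<Sum>i\<in>I. c i) = \<phi>"
  shows "(\<Sum>i\<in>I. exp (- (l * c i / \<phi>)) * c i) \<le> round_factor l k * \<phi>"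
proof (cases "\<phi> = 0")
  case True
  then have "\<forall>i\<in>I. c i = 0" using I c by (simp add: sum_nonneg_eq_0_iff)
  then show ?thesis using True by simp
next
  case False
  then have "\<phi> > 0" using c sum_nonneg[of I c] by fastforce
  define y where "y i = l * c i / \<phi>" for i
  have y: "y i \<ge> 0" if "i \<in> I" for i using c that l \<open>\<phi> > 0\<close> by (simp add: y_def)
  have "(\<Sum>i\<in>I. y i) = l" using \<open>\<phi> > 0\<close> c by (simp add: y_def flip: sum_distrib_left sum_divide_distrib)
  have "(\<Sum>i\<in>I. exp (- (l * c i / \<phi>)) * c i) = \<phi> / l * (\<Sum>i\<in>I. y i * exp (- y i))"
    using \<open>\<phi> > 0\<close> l by (simp add: y_def sum_distrib_left mult.commute)
  also have "\<dots> \<le> round_factor l k * \<phi>"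
  proof (cases "l < real k")
    case True
    have "(\<Sum>i\<in>I. y i * exp (- y i)) \<le> l * exp (- l / real k)"
      using sum_mul_exp_neg_le_tangent[OF I(1) _ y \<open>(\<Sum>i\<in>I. y i) = l\<close>] I True
      by (metis card.empty not_one_le_zero)
    then have "\<phi> / l * (\<Sum>i\<in>I. y i * exp (- y i)) \<le> \<phi> / l * (l * exp (- l / real k))"
      using l \<open>\<phi> > 0\<close> by (intro mult_left_mono) auto
    then show ?thesis using True l by (simp add: round_factor_def mult.commute)
  next
    case False
    have "\<phi> / l * (\<Sum>i\<in>I. y i * exp (- y i)) \<le> \<phi> / l * (real k * exp (- 1))"
      using sum_mul_exp_neg_le_card[of y I] I l \<open>\<phi> > 0\<close> by (intro mult_left_mono) auto
    then show ?thesis using False by (simp add: round_factor_def exp_minus field_simps)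
  qed
  finally show ?thesis .
qed

section \<open>One round of k-means||\<close>

lemma samp_rate_nonneg:
  assumes "finite C" "C \<noteq> {}" "l \<ge> 0"
  shows "samp_rate X l C x \<ge> 0"
  using assms pcost_nonneg[OF assms(1,2)] setcost_nonneg[OF assms(1,2)]
  by (auto simp: samp_rate_def intro!: divide_nonneg_nonneg)

lemma expectation_cluster_cost_le:
  fixes X C P :: "'a::euclidean_space set"
  assumes X: "finite X" and C: "finite C" "C \<noteq> {}" and P: "P \<subseteq> X" and l: "l > 0"
  shows "measure_pmf.expectation (Pi_pmf X False (\<lambda>x. bernoulli_pmf (min 1 (samp_rate X l C x))))
           (\<lambda>b. setcost P (C \<union> {x\<in>X. b x}))
       \<le> exp (- (l * setcost P C / setcost X C)) * setcost P C
         + 5 * (\<Sum>y\<in>P. (norm (y - centroid P))\<^sup>2)"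
proof -
  define \<phi> where "\<phi> = setcost X C"
  define c where "c = setcost P C"
  define A where "A = (\<Sum>y\<in>P. (norm (y - centroid P))\<^sup>2)"
  define \<mu> where "\<mu> x = (if x \<in> P then samp_rate X l C x else 0)" for x
  define g where "g y = setcost P (insert y C)" for y
  let ?B = "Pi_pmf X False (\<lambda>x. bernoulli_pmf (min 1 (samp_rate X l C x)))"
  have "finite P" using X P finite_subset by blast
  have rate: "samp_rate X l C x \<ge> 0" for x using samp_rate_nonneg[OF C] l by simp
  have gc: "g x \<le> c" for x using C by (auto simp: g_def c_def intro: setcost_antimono)
  have "measure_pmf.expectation ?B (\<lambda>b. setcost P (C \<union> {x\<in>X. b x}))
      \<le> measure_pmf.expectation ?B (\<lambda>b. Min (insert c (g ` {x\<in>X. b x})))"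
    using X C unfolding c_def g_def
    by (intro integral_mono_AE integrable_measure_pmf_finite finite_set_pmf_Pi_pmf_bool AE_pmfI
        setcost_union_le_Min) auto
  also have "\<dots> \<le> min_sample_bound c (\<Sum>x\<in>X. \<mu> x) (\<Sum>x\<in>X. \<mu> x * g x)"
  proof (rule expectation_min_sample_le[OF X])
    fix x
    show "1 - exp (- \<mu> x) \<le> min 1 (samp_rate X l C x)"
      using exp_ge_add_one_self[of "- samp_rate X l C x"] rate[of x] by (auto simp: \<mu>_def)
  qed (use rate gc in \<open>auto simp: \<mu>_def\<close>)
  also have "\<dots> \<le> exp (- (l * c / \<phi>)) * c + 5 * A"
  proof -
    have sum_\<mu>: "(\<Sum>x\<in>X. \<mu> x) = l * c / \<phi>"
      using X P by (simp add: \<mu>_def sum.If_cases Int_absorb1 samp_rate_def c_def \<phi>_def setcost_def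
          sum_divide_distrib sum_distrib_left)
    have "(\<Sum>x\<in>X. \<mu> x * g x) = (\<Sum>x\<in>X. if x \<in> P then samp_rate X l C x * g x else 0)"
      by (intro sum.cong) (simp_all add: \<mu>_def)
    also have "\<dots> = l / \<phi> * (\<Sum>x\<in>P. pcost x C * setcost P (insert x C))"
      using X P by (simp add: g_def sum.If_cases Int_absorb1 samp_rate_def \<phi>_def
          sum_distrib_left mult.assoc)
    also have "\<dots> \<le> l / \<phi> * (5 * A * c)"
      using d2_sample_cost_le[OF \<open>finite P\<close> C] l setcost_nonneg[OF C, of X]
      by (intro mult_left_mono) (auto simp: A_def c_def \<phi>_def)
    finally have "(\<Sum>x\<in>X. \<mu> x * g x) \<le> (\<Sum>x\<in>X. \<mu> x) * (5 * A)" by (simp add: sum_\<mu> ac_simps)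
    moreover have "(\<Sum>x\<in>X. \<mu> x) \<ge> 0" using rate by (intro sum_nonneg) (simp add: \<mu>_def)
    moreover have "A \<ge> 0" unfolding A_def by (intro sum_nonneg) auto
    ultimately show ?thesis using sum_\<mu> by (simp add: min_sample_bound_le)
  qed
  finally show ?thesis by (simp add: c_def \<phi>_def A_def)
qed

lemma finite_set_pmf_kmpar_step: "finite X \<Longrightarrow> finite (set_pmf (kmpar_step X l C))"
  unfolding kmpar_step_def by (simp add: finite_set_pmf_Pi_pmf_bool)

lemma expectation_kmpar_step_cost_le:
  fixes X C K :: "'a::euclidean_space set"
  assumes X: "finite X" and C: "finite C" "C \<noteq> {}"
    and K: "finite K" "card K = k" "k \<ge> 1" and l: "l > 0"
  shows "measure_pmf.expectation (kmpar_step X l C) (setcost X)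
       \<le> round_factor l k * setcost X C + 5 * setcost X K"
proof -
  have "K \<noteq> {}" using K by auto
  then obtain a where a: "\<And>x. a x \<in> K" "\<And>x. pcost x K = (norm (x - a x))\<^sup>2"
    using pcost_nearest[OF K(1)] by blast
  define cell where "cell c = {x\<in>X. a x = c}" for c
  have "a ` X \<subseteq> K" using a(1) by auto
  then have split: "setcost X D = (\<Sum>c\<in>K. setcost (cell c) D)" for D
    unfolding setcost_def cell_def using sum.group[OF X K(1), of a "\<lambda>x. pcost x D"] by simp
  let ?B = "Pi_pmf X False (\<lambda>x. bernoulli_pmf (min 1 (samp_rate X l C x)))"
  have "measure_pmf.expectation (kmpar_step X l C) (setcost X)
      = measure_pmf.expectation ?B (\<lambda>b. \<Sum>c\<in>K. setcost (cell c) (C \<union> {x\<in>X. b x}))"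
    unfolding kmpar_step_def split by simp
  also have "\<dots> = (\<Sum>c\<in>K. measure_pmf.expectation ?B (\<lambda>b. setcost (cell c) (C \<union> {x\<in>X. b x})))"
    by (intro Bochner_Integration.integral_sum integrable_measure_pmf_finite finite_set_pmf_Pi_pmf_bool X)
  also have "\<dots> \<le> (\<Sum>c\<in>K. exp (- (l * setcost (cell c) C / setcost X C)) * setcost (cell c) C
                        + 5 * (\<Sum>y\<in>cell c. (norm (y - centroid (cell c)))\<^sup>2))"
    by (intro sum_mono expectation_cluster_cost_le[OF X C _ l]) (auto simp: cell_def)
  also have "\<dots> \<le> round_factor l k * setcost X C + 5 * setcost X K"
  proof -
    have "(\<Sum>c\<in>K. exp (- (l * setcost (cell c) C / setcost X C)) * setcost (cell c) C)
        \<le> round_factor l k * setcost X C"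
      using split[of C] setcost_nonneg[OF C] by (intro sum_exp_neg_mul_le_round_factor K l) auto
    moreover have "(\<Sum>c\<in>K. \<Sum>y\<in>cell c. (norm (y - centroid (cell c)))\<^sup>2) \<le> setcost X K"
    proof -
      have "(\<Sum>c\<in>K. \<Sum>y\<in>cell c. (norm (y - centroid (cell c)))\<^sup>2) \<le> (\<Sum>c\<in>K. \<Sum>y\<in>cell c. (norm (y - c))\<^sup>2)"
        using X by (intro sum_mono sum_sq_dist_centroid_le) (simp add: cell_def)
      also have "\<dots> = (\<Sum>c\<in>K. setcost (cell c) K)"
        unfolding setcost_def a(2) by (intro sum.cong) (auto simp: cell_def)
      finally show ?thesis using split by simp
    qed
    ultimately show ?thesis by (simp add: sum.distrib flip: sum_distrib_left)
  qed
  finally show ?thesis .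
qed

lemma set_pmf_kmpar_seq:
  assumes "finite X" "X \<noteq> {}" "C \<in> set_pmf (kmpar_seq X l n)"
  shows "finite C \<and> C \<noteq> {} \<and> C \<subseteq> X"
  using assms(3)
proof (induction n arbitrary: C)
  case (Suc n)
  then obtain C0 b where "C0 \<in> set_pmf (kmpar_seq X l n)" "C = C0 \<union> {x\<in>X. b x}"
    by (auto simp: kmpar_step_def)
  with Suc.IH show ?case using assms(1) by auto
qed (use assms in auto)

lemma expectation_bind_pmf_finite:
  fixes f :: "'b \<Rightarrow> real"
  assumes "finite A" "set_pmf M \<subseteq> A" "\<And>x. x \<in> A \<Longrightarrow> finite (set_pmf (N x))"
  shows "measure_pmf.expectation (M \<bind> N) f = measure_pmf.expectation M (\<lambda>x. measure_pmf.expectation (N x) f)"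
proof -
  have "measure_pmf.expectation (M \<bind> N) f = (\<Sum>a\<in>A. pmf M a *\<^sub>R measure_pmf.expectation (N a) f)"
    by (rule pmf_expectation_bind[OF assms(1,3,2)])
  also have "\<dots> = measure_pmf.expectation M (\<lambda>x. measure_pmf.expectation (N x) f)"
    using assms by (subst integral_measure_pmf[OF assms(1)]) auto
  finally show ?thesis .
qed

lemma exp_cost_Suc_le:
  fixes X K :: "'a::euclidean_space set"
  assumes X: "finite X" "X \<noteq> {}" and K: "finite K" "card K = k" "k \<ge> 1" and "l > 0" "t \<ge> 1"
  shows "exp_cost X l (t + 1) \<le> round_factor l k * exp_cost X l t + 5 * setcost X K"
proof -
  obtain n where t: "t = Suc n" using \<open>t \<ge> 1\<close> by (cases t) auto
  let ?M = "kmpar_seq X l n"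
  have supp: "set_pmf ?M \<subseteq> Pow X" using set_pmf_kmpar_seq[OF X] by blast
  then have fin: "finite (set_pmf ?M)" using X(1) finite_subset by blast
  have "kmpar_C X l (t + 1) = ?M \<bind> kmpar_step X l"
    by (simp add: kmpar_C_def t)
  then have "exp_cost X l (t + 1)
      = measure_pmf.expectation ?M (\<lambda>C. measure_pmf.expectation (kmpar_step X l C) (setcost X))"
    unfolding exp_cost_def
    using expectation_bind_pmf_finite[OF _ supp, of "kmpar_step X l" "setcost X"] X(1)
    by (simp add: finite_set_pmf_kmpar_step)
  also have "\<dots> \<le> measure_pmf.expectation ?M (\<lambda>C. round_factor l k * setcost X C + 5 * setcost X K)"
  proof (intro integral_mono_AE integrable_measure_pmf_finite fin AE_pmfI)
    fix C assume "C \<in> set_pmf ?M"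
    then have "finite C" "C \<noteq> {}" using set_pmf_kmpar_seq[OF X] by blast+
    then show "measure_pmf.expectation (kmpar_step X l C) (setcost X)
        \<le> round_factor l k * setcost X C + 5 * setcost X K"
      using expectation_kmpar_step_cost_le[OF X(1) _ _ K] \<open>l > 0\<close> by blast
  qed
  also have "\<dots> = round_factor l k * measure_pmf.expectation ?M (setcost X) + 5 * setcost X K"
    by (subst Bochner_Integration.integral_add)
       (simp_all add: integrable_measure_pmf_finite[OF fin] integral_mult_right_zero)
  also have "\<dots> = round_factor l k * exp_cost X l t + 5 * setcost X K"
    by (simp add: exp_cost_def kmpar_C_def t)
  finally show ?thesis .
qed

lemma infinite_UNIV_euclidean: "infinite (UNIV :: 'a::euclidean_space set)"
proof
  assume "finite (UNIV :: 'a set)"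
  obtain b :: 'a where "b \<in> Basis" using nonempty_Basis by blast
  then have "inj (\<lambda>r::real. r *\<^sub>R b)" by (intro injI) auto
  with \<open>finite UNIV\<close> have "finite (UNIV :: real set)"
    by (metis finite_imageD finite_subset subset_UNIV)
  then show False using infinite_UNIV_char_0 by blast
qed

lemma OPT_greatest:
  fixes X :: "'a::euclidean_space set"
  assumes "\<And>K. finite K \<Longrightarrow> card K = k \<Longrightarrow> a \<le> setcost X K"
  shows "a \<le> OPT k X"
proof -
  obtain K :: "'a set" where "finite K" "card K = k"
    using infinite_arbitrarily_large[OF infinite_UNIV_euclidean] by blast
  then show ?thesis unfolding OPT_def using assms by (intro cInf_greatest) auto
qed

theorem mainTheorem11:
  fixes X :: "'a::euclidean_space set" and k :: nat and l :: real and t :: nat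
  assumes "finite X" and "X \<noteq> {}" and "k \<ge> 1" and "l > 0" and "t \<ge> 1"
  shows "(l < real k \<longrightarrow>
           exp_cost X l (t + 1) \<le> exp (- l / real k) * exp_cost X l t + 5 * OPT k X)
       \<and> (l \<ge> real k \<longrightarrow>
           exp_cost X l (t + 1) \<le> real k / (exp 1 * l) * exp_cost X l t + 5 * OPT k X)"
proof -
  have "(exp_cost X l (t + 1) - round_factor l k * exp_cost X l t) / 5 \<le> OPT k X"
  proof (rule OPT_greatest)
    fix K :: "'a set" assume "finite K" "card K = k"
    from exp_cost_Suc_le[OF assms(1,2) this assms(3-5)]
    show "(exp_cost X l (t + 1) - round_factor l k * exp_cost X l t) / 5 \<le> setcost X K" by simp
  qed
  then show ?thesis by (auto simp: round_factor_def)
qed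

end
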